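(* Let $n\geq 1$ be an integer, let $\mathbb{D}:=\{z\in\mathbb{C}:|z|<1\}$ and $\mathbb{B}_n:=\{(z_1,\dots,z_n)\in\mathbb{C}^n: |z_1|^2+\cdots+|z_n|^2<1\}$, and let $X$ denote either $\mathbb{D}^n$ or $\mathbb{B}_n$. Let $R_n$ be a commutative unital subring of the ring $\mathbb{C}^{X}$ of all complex-valued functions on $X$, with the usual pointwise addition and multiplication. For $f\in R_n$ define the function $Df:\mathbb{D}\to\mathbb{C}$ by $(Df)(z_1):=f(z_1,0,\dots,0)$, and set $DR_n:=\{Df: f\in R_n\}$ (a ring of functions on $\mathbb{D}$ under pointwise operations). For $g\in DR_n$ define $Ug:X\to\mathbb{C}$ by $(Ug)(z_1,\dots,z_n):=g(z_1)$. Suppose that $UDf\in R_n$ for all $f\in R_n$. If $R_n$ is coherent, then $DR_n$ is coherent.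
   Context: A unital commutative ring $R$ is called coherent if the intersection of any two finitely generated ideals of $R$ is finitely generated, and for every $a\in R$ the annihilator $\mathrm{Ann}(a):=\{x\in R: ax=0\}$ is a finitely generated ideal. *)

theory Defs
  imports "HOL-Algebra.Algebra" "HOL-Library.FuncSet"
begin

text \<open>Points of C^n are modelled as functions nat => complex vanishing at indices >= n
  (coordinate z_{i+1} is z i).\<close>

definition polydisc :: "nat \<Rightarrow> (nat \<Rightarrow> complex) set" where
  "polydisc n = {z. (\<forall>i<n. cmod (z i) < 1) \<and> (\<forall>i\<ge>n. z i = 0)}"

definition unit_ball_n :: "nat \<Rightarrow> (nat \<Rightarrow> complex) set" where
  "unit_ball_n n = {z. (\<Sum>i<n. (cmod (z i))^2) < 1 \<and> (\<forall>i\<ge>n. z i = 0)}"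

definition unit_disc :: "complex set" where
  "unit_disc = {z. cmod z < 1}"

definition func_ring :: "'a set \<Rightarrow> ('a \<Rightarrow> complex) ring" where
  "func_ring Xn = \<lparr>carrier = extensional Xn,
      monoid.mult = (\<lambda>f g. restrict (\<lambda>x. f x * g x) Xn),
      monoid.one = restrict (\<lambda>x. 1) Xn,
      ring.zero = restrict (\<lambda>x. 0) Xn,
      ring.add = (\<lambda>f g. restrict (\<lambda>x. f x + g x) Xn)\<rparr>"

definition Dmap :: "((nat \<Rightarrow> complex) \<Rightarrow> complex) \<Rightarrow> complex \<Rightarrow> complex" where
  "Dmap f = restrict (\<lambda>w. f (\<lambda>i. if i = 0 then w else 0)) unit_disc"

definition Umap :: "(nat \<Rightarrow> complex) set \<Rightarrow> (complex \<Rightarrow> complex) \<Rightarrow> (nat \<Rightarrow> complex) \<Rightarrow> complex" where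
  "Umap Xn g = restrict (\<lambda>z. g (z 0)) Xn"

definition fg_ideal :: "('a, 'b) ring_scheme \<Rightarrow> 'a set \<Rightarrow> bool" where
  "fg_ideal R I \<longleftrightarrow> ideal I R \<and> (\<exists>S. finite S \<and> S \<subseteq> carrier R \<and> I = genideal R S)"

definition coherent_ring :: "('a, 'b) ring_scheme \<Rightarrow> bool" where
  "coherent_ring R \<longleftrightarrow> cring R \<and>
     (\<forall>I J. fg_ideal R I \<and> fg_ideal R J \<longrightarrow> fg_ideal R (I \<inter> J)) \<and>
     (\<forall>a\<in>carrier R. fg_ideal R {x \<in> carrier R. a \<otimes>\<^bsub>R\<^esub> x = \<zero>\<^bsub>R\<^esub>})"

end

theory Submission
  imports Defs
begin

text \<open>D and U exhibit DR_n as a retract of R_n: both are ring homomorphisms (D because the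
  axis {(w,0,...,0)} lies in X, U because the first coordinate of a point of X lies in the
  disc) and D \<circ> U is the identity. Coherence passes to retracts: a finitely generated ideal
  (S) downstairs lifts to (U S) upstairs, D maps the intersection and the annihilator ideals
  computed upstairs onto those downstairs, and the image of a finitely generated ideal under
  the surjection D is finitely generated.\<close>

lemma (in ring_hom_ring) genideal_image_subset:
  assumes "T \<subseteq> carrier R"
  shows "h ` genideal R T \<subseteq> genideal S (h ` T)"
proof -
  have hT: "h ` T \<subseteq> carrier S" using assms by auto
  have "ideal {r \<in> carrier R. h r \<in> genideal S (h ` T)} R"
    by (rule ideal_vimage[OF S.genideal_ideal[OF hT]])
  moreover have "T \<subseteq> {r \<in> carrier R. h r \<in> genideal S (h ` T)}"
    using assms S.genideal_self[OF hT] by auto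
  ultimately have "genideal R T \<subseteq> {r \<in> carrier R. h r \<in> genideal S (h ` T)}"
    by (rule R.genideal_minimal)
  then show ?thesis by blast
qed

lemma (in ring_hom_ring) ideal_image_surj:
  assumes surj: "h ` carrier R = carrier S" and I: "ideal I R"
  shows "ideal (h ` I) S"
proof (rule idealI)
  show "ring S" by (rule S.ring_axioms)
  show "subgroup (h ` I) (add_monoid S)"
    by (rule img_is_add_subgroup[OF additive_subgroup.a_subgroup[OF ideal.axioms(1)[OF I]]])
next
  fix a x assume "a \<in> h ` I" and "x \<in> carrier S"
  then obtain i y where i: "i \<in> I" "a = h i" and y: "y \<in> carrier R" "x = h y"
    using surj by blast
  have iR: "i \<in> carrier R" by (rule ideal.Icarr[OF I i(1)])
  have "x \<otimes>\<^bsub>S\<^esub> a = h (y \<otimes> i)" "a \<otimes>\<^bsub>S\<^esub> x = h (i \<otimes> y)"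
    using i(2) y iR by simp_all
  moreover have "y \<otimes> i \<in> I" "i \<otimes> y \<in> I"
    using ideal.I_l_closed[OF I i(1) y(1)] ideal.I_r_closed[OF I i(1) y(1)] by simp_all
  ultimately show "x \<otimes>\<^bsub>S\<^esub> a \<in> h ` I" "a \<otimes>\<^bsub>S\<^esub> x \<in> h ` I" by auto
qed

lemma (in ring_hom_ring) genideal_image_surj:
  assumes surj: "h ` carrier R = carrier S" and T: "T \<subseteq> carrier R"
  shows "h ` genideal R T = genideal S (h ` T)"
proof
  show "h ` genideal R T \<subseteq> genideal S (h ` T)" by (rule genideal_image_subset[OF T])
  have "ideal (h ` genideal R T) S" by (rule ideal_image_surj[OF surj R.genideal_ideal[OF T]])
  moreover have "h ` T \<subseteq> h ` genideal R T" using R.genideal_self[OF T] by (rule image_mono)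
  ultimately show "genideal S (h ` T) \<subseteq> h ` genideal R T" by (rule S.genideal_minimal)
qed

lemma (in ring_hom_ring) fg_ideal_image_surj:
  assumes surj: "h ` carrier R = carrier S" and I: "fg_ideal R I"
  shows "fg_ideal S (h ` I)"
proof -
  obtain T where T: "finite T" "T \<subseteq> carrier R" "I = genideal R T"
    using I unfolding fg_ideal_def by blast
  have "ideal (h ` I) S" using ideal_image_surj[OF surj] I unfolding fg_ideal_def by blast
  moreover have "h ` I = genideal S (h ` T)" using genideal_image_surj[OF surj T(2)] T(3) by simp
  moreover have "finite (h ` T)" "h ` T \<subseteq> carrier S" using T(1,2) by auto
  ultimately show ?thesis unfolding fg_ideal_def by blast
qed

locale ring_retraction = ring_hom_ring A B h for A (structure) and B (structure) and h +
  fixes s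
  assumes section_hom: "s \<in> ring_hom B A"
    and retraction: "\<And>b. b \<in> carrier B \<Longrightarrow> h (s b) = b"
begin

sublocale lift: ring_hom_ring B A s
  by (rule ring_hom_ringI2[OF S.ring_axioms R.ring_axioms section_hom])

lemma h_surj: "h ` carrier A = carrier B"
  using retraction by (force intro: image_eqI[OF sym])

lemma image_section: "T \<subseteq> carrier B \<Longrightarrow> h ` s ` T = T"
  by (force simp: image_image retraction intro: image_eqI[OF sym])

lemma genideal_section:
  assumes "T \<subseteq> carrier B"
  shows "h ` genideal A (s ` T) = genideal B T"
proof -
  have "s ` T \<subseteq> carrier A" using assms by auto
  then show ?thesis using genideal_image_surj[OF h_surj] image_section[OF assms] by simp
qed

lemma image_Int_genideal_section:
  assumes T: "T \<subseteq> carrier B" and T': "T' \<subseteq> carrier B"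
  shows "h ` (genideal A (s ` T) \<inter> genideal A (s ` T')) = genideal B T \<inter> genideal B T'"
proof
  show "h ` (genideal A (s ` T) \<inter> genideal A (s ` T')) \<subseteq> genideal B T \<inter> genideal B T'"
    using genideal_section[OF T] genideal_section[OF T'] by blast
  show "genideal B T \<inter> genideal B T' \<subseteq> h ` (genideal A (s ` T) \<inter> genideal A (s ` T'))"
  proof
    fix x assume x: "x \<in> genideal B T \<inter> genideal B T'"
    then have "x \<in> carrier B" using ideal.Icarr[OF S.genideal_ideal[OF T]] by blast
    moreover have "s x \<in> genideal A (s ` T) \<inter> genideal A (s ` T')"
      using x lift.genideal_image_subset[OF T] lift.genideal_image_subset[OF T'] by blast
    ultimately show "x \<in> h ` (genideal A (s ` T) \<inter> genideal A (s ` T'))"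
      by (metis retraction image_eqI)
  qed
qed

lemma image_annihilator_section:
  assumes a: "a \<in> carrier B"
  shows "h ` {x \<in> carrier A. s a \<otimes>\<^bsub>A\<^esub> x = \<zero>\<^bsub>A\<^esub>} = {y \<in> carrier B. a \<otimes>\<^bsub>B\<^esub> y = \<zero>\<^bsub>B\<^esub>}"
proof
  show "h ` {x \<in> carrier A. s a \<otimes>\<^bsub>A\<^esub> x = \<zero>\<^bsub>A\<^esub>} \<subseteq> {y \<in> carrier B. a \<otimes>\<^bsub>B\<^esub> y = \<zero>\<^bsub>B\<^esub>}"
  proof clarify
    fix x assume "x \<in> carrier A" "s a \<otimes>\<^bsub>A\<^esub> x = \<zero>\<^bsub>A\<^esub>"
    then have "h (s a) \<otimes>\<^bsub>B\<^esub> h x = \<zero>\<^bsub>B\<^esub>"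
      using a by (metis hom_mult hom_zero lift.hom_closed)
    then show "h x \<in> carrier B \<and> a \<otimes>\<^bsub>B\<^esub> h x = \<zero>\<^bsub>B\<^esub>"
      using a \<open>x \<in> carrier A\<close> retraction by simp
  qed
  show "{y \<in> carrier B. a \<otimes>\<^bsub>B\<^esub> y = \<zero>\<^bsub>B\<^esub>} \<subseteq> h ` {x \<in> carrier A. s a \<otimes>\<^bsub>A\<^esub> x = \<zero>\<^bsub>A\<^esub>}"
  proof clarify
    fix y assume y: "y \<in> carrier B" "a \<otimes>\<^bsub>B\<^esub> y = \<zero>\<^bsub>B\<^esub>"
    then have "s a \<otimes>\<^bsub>A\<^esub> s y = \<zero>\<^bsub>A\<^esub>"
      using a by (metis lift.hom_mult lift.hom_zero)
    then have "s y \<in> {x \<in> carrier A. s a \<otimes>\<^bsub>A\<^esub> x = \<zero>\<^bsub>A\<^esub>}" using y(1) by simp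
    then show "y \<in> h ` {x \<in> carrier A. s a \<otimes>\<^bsub>A\<^esub> x = \<zero>\<^bsub>A\<^esub>}"
      by (rule image_eqI[where f = h, OF retraction[OF y(1), symmetric]])
  qed
qed

lemma coherent_ring_retract:
  assumes A: "coherent_ring A" and B: "cring B"
  shows "coherent_ring B"
proof -
  have fg_section: "fg_ideal A (genideal A (s ` T))" if T: "finite T" "T \<subseteq> carrier B" for T
  proof -
    have "s ` T \<subseteq> carrier A" using T(2) by auto
    then show ?thesis using R.genideal_ideal T(1) unfolding fg_ideal_def by blast
  qed
  have "fg_ideal B (I \<inter> J)" if I: "fg_ideal B I" and J: "fg_ideal B J" for I J
  proof -
    obtain T T' where T: "finite T" "T \<subseteq> carrier B" "I = genideal B T"
      and T': "finite T'" "T' \<subseteq> carrier B" "J = genideal B T'"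
      using I J unfolding fg_ideal_def by blast
    have "fg_ideal A (genideal A (s ` T) \<inter> genideal A (s ` T'))"
      using A fg_section[OF T(1,2)] fg_section[OF T'(1,2)] unfolding coherent_ring_def by blast
    then have "fg_ideal B (h ` (genideal A (s ` T) \<inter> genideal A (s ` T')))"
      by (rule fg_ideal_image_surj[OF h_surj])
    then show ?thesis using image_Int_genideal_section[OF T(2) T'(2)] T(3) T'(3) by simp
  qed
  moreover have "fg_ideal B {y \<in> carrier B. a \<otimes>\<^bsub>B\<^esub> y = \<zero>\<^bsub>B\<^esub>}" if a: "a \<in> carrier B" for a
  proof -
    have "fg_ideal A {x \<in> carrier A. s a \<otimes>\<^bsub>A\<^esub> x = \<zero>\<^bsub>A\<^esub>}"
      using A lift.hom_closed[OF a] unfolding coherent_ring_def by blast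
    then have "fg_ideal B (h ` {x \<in> carrier A. s a \<otimes>\<^bsub>A\<^esub> x = \<zero>\<^bsub>A\<^esub>})"
      by (rule fg_ideal_image_surj[OF h_surj])
    then show ?thesis using image_annihilator_section[OF a] by simp
  qed
  ultimately show ?thesis using B unfolding coherent_ring_def by simp
qed

end

lemma func_ring_cring: "cring (func_ring Y)"
proof (rule cringI)
  show "abelian_group (func_ring Y)"
  proof (rule abelian_groupI)
    fix x assume x: "x \<in> carrier (func_ring Y)"
    show "\<exists>y\<in>carrier (func_ring Y). y \<oplus>\<^bsub>func_ring Y\<^esub> x = \<zero>\<^bsub>func_ring Y\<^esub>"
      by (rule bexI[of _ "restrict (\<lambda>z. - x z) Y"])
        (auto simp: func_ring_def fun_eq_iff restrict_def extensional_def)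
  qed (auto simp: func_ring_def fun_eq_iff restrict_def extensional_def)
  show "comm_monoid (func_ring Y)"
    by (rule comm_monoidI) (auto simp: func_ring_def fun_eq_iff restrict_def extensional_def)
qed (auto simp: func_ring_def fun_eq_iff restrict_def extensional_def algebra_simps)

lemma axis_mem_polydisc_or_ball:
  assumes "n \<ge> 1" "Xn = polydisc n \<or> Xn = unit_ball_n n" "w \<in> unit_disc"
  shows "(\<lambda>i. if i = 0 then w else 0) \<in> Xn"
proof -
  have "(\<Sum>i<n. (cmod (if i = 0 then w else 0))^2) = (\<Sum>i<n. if i = 0 then (cmod w)^2 else 0)"
    by (rule sum.cong) auto
  also have "\<dots> = (cmod w)^2" using assms(1) by (simp add: sum.delta)
  finally have "(\<Sum>i<n. (cmod (if i = 0 then w else 0))^2) = (cmod w)^2" .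
  moreover have "cmod w < 1" using assms(3) by (simp add: unit_disc_def)
  moreover from this have "(cmod w)^2 < 1" by (simp add: abs_square_less_1)
  ultimately show ?thesis using assms by (auto simp: polydisc_def unit_ball_n_def)
qed

lemma first_coord_mem_unit_disc:
  assumes "n \<ge> 1" "Xn = polydisc n \<or> Xn = unit_ball_n n" "z \<in> Xn"
  shows "z 0 \<in> unit_disc"
  using assms(2)
proof
  assume "Xn = polydisc n"
  then show ?thesis using assms by (auto simp: polydisc_def unit_disc_def)
next
  assume X: "Xn = unit_ball_n n"
  have "(cmod (z 0))^2 \<le> (\<Sum>i<n. (cmod (z i))^2)"
    using assms(1) by (intro member_le_sum) auto
  also have "\<dots> < 1" using assms X by (auto simp: unit_ball_n_def)
  finally show ?thesis by (simp add: unit_disc_def abs_square_less_1)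
qed

lemma Dmap_ring_hom:
  assumes "\<And>w. w \<in> unit_disc \<Longrightarrow> (\<lambda>i. if i = 0 then w else 0) \<in> Xn"
  shows "Dmap \<in> ring_hom ((func_ring Xn)\<lparr>carrier := R\<rparr>) (func_ring unit_disc)"
  by (rule ring_hom_memI) (simp_all add: func_ring_def Dmap_def fun_eq_iff restrict_def extensional_def assms)

lemma Umap_ring_hom:
  assumes "\<And>z. z \<in> Xn \<Longrightarrow> z 0 \<in> unit_disc" and "Umap Xn ` T \<subseteq> R"
  shows "Umap Xn \<in> ring_hom ((func_ring unit_disc)\<lparr>carrier := T\<rparr>) ((func_ring Xn)\<lparr>carrier := R\<rparr>)"
  by (rule ring_hom_memI) (use assms in \<open>auto simp: func_ring_def Umap_def fun_eq_iff restrict_def\<close>)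

lemma Dmap_Umap:
  assumes "\<And>w. w \<in> unit_disc \<Longrightarrow> (\<lambda>i. if i = 0 then w else 0) \<in> Xn"
    and "g \<in> extensional unit_disc"
  shows "Dmap (Umap Xn g) = g"
  using assms by (auto simp: Dmap_def Umap_def fun_eq_iff restrict_def extensional_def)

theorem mainTheorem1:
  fixes n :: nat and Xn :: "(nat \<Rightarrow> complex) set" and R :: "((nat \<Rightarrow> complex) \<Rightarrow> complex) set"
  assumes "n \<ge> 1"
    and "Xn = polydisc n \<or> Xn = unit_ball_n n"
    and "subring R (func_ring Xn)"
    and "\<forall>f\<in>R. Umap Xn (Dmap f) \<in> R"
    and "coherent_ring ((func_ring Xn)\<lparr>carrier := R\<rparr>)"
  shows "coherent_ring ((func_ring unit_disc)\<lparr>carrier := Dmap ` R\<rparr>)"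
proof -
  let ?A = "(func_ring Xn)\<lparr>carrier := R\<rparr>"
  let ?B = "(func_ring unit_disc)\<lparr>carrier := Dmap ` R\<rparr>"
  note axis = axis_mem_polydisc_or_ball[OF assms(1,2)]
  have cA: "cring ?A" using assms(5) unfolding coherent_ring_def by blast
  interpret D: ring_hom_ring ?A "func_ring unit_disc" Dmap
    using ring_hom_ringI2[OF cring.axioms(1)[OF cA] cring.axioms(1)[OF func_ring_cring]]
      Dmap_ring_hom[OF axis] .
  have "Dmap \<in> ring_hom ?A ?B"
    using Dmap_ring_hom[OF axis] by (auto simp: ring_hom_def)
  moreover have "Umap Xn \<in> ring_hom ?B ?A"
    using first_coord_mem_unit_disc[OF assms(1,2)] assms(4) by (intro Umap_ring_hom) auto
  moreover have "Dmap (Umap Xn g) = g" if "g \<in> carrier ?B" for g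
    by (rule Dmap_Umap[OF axis]) (use that in \<open>auto simp: Dmap_def\<close>)
  moreover have "ring ?B" using D.img_is_ring by simp
  ultimately interpret ring_retraction ?A ?B Dmap "Umap Xn"
    by (intro ring_retraction.intro ring_retraction_axioms.intro ring_hom_ringI2
        cring.axioms(1)[OF cA])
  show ?thesis
    by (rule coherent_ring_retract[OF assms(5)]) (use D.img_is_cring[OF func_ring_cring] in simp)
qed

end
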